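(* Let $(P,\leqslant)$ be a locally finite poset having a minimum element $\hat{0}$. Suppose that for every nonempty finite subset $S \subset P$ there exists an element $z \in S$ such that there are infinitely many $x \in P$ with $x \geqslant z$ but $x \not\geqslant y$ for every $y \in S\setminus\{z\}$. Then $P$ has the Möbius uncertainty property: whenever $f,g : P \to \mathbb{C}$ are functions, neither identically zero, satisfying \[ g(z) = \sum_{x \in P,\ x \leqslant z} f(x) \quad \text{for every } z \in P, \] at least one of $\operatorname{supp}(f) = \{x \in P : f(x)\neq 0\}$ and $\operatorname{supp}(g)=\{x\in P: g(x)\neq 0\}$ is infinite.
   Context: A poset is locally finite if every interval $\{z : x \leqslant z \leqslant y\}$ is finite; in particular the sum defining $g$ is finite. *)

theory Defs
  imports "HOL-Analysis.Analysis"
begin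

text \<open>The poset P is the whole type 'a, with its partial order.\<close>

definition locally_finite_poset :: "'a::order itself \<Rightarrow> bool" where
  "locally_finite_poset _ \<longleftrightarrow> (\<forall>x y::'a. finite {z. x \<le> z \<and> z \<le> y})"

definition has_minimum :: "'a::order itself \<Rightarrow> bool" where
  "has_minimum _ \<longleftrightarrow> (\<exists>m::'a. \<forall>x. m \<le> x)"

definition supp :: "('a \<Rightarrow> complex) \<Rightarrow> 'a set" where
  "supp f = {x. f x \<noteq> 0}"

definition moebius_uncertainty :: "'a::order itself \<Rightarrow> bool" where
  "moebius_uncertainty _ \<longleftrightarrow>
     (\<forall>(f::'a \<Rightarrow> complex) g. f \<noteq> (\<lambda>_. 0) \<and> g \<noteq> (\<lambda>_. 0) \<and>
        (\<forall>z. g z = (\<Sum>x\<in>{x. x \<le> z}. f x))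
        \<longrightarrow> infinite (supp f) \<or> infinite (supp g))"

end

theory Submission
  imports Defs
begin

text \<open>If both supports were finite, apply the hypothesis to \<open>S = supp f\<close>: it yields \<open>z \<in> supp f\<close>
  and infinitely many \<open>x \<ge> z\<close> lying above no other point of \<open>supp f\<close>. For each such \<open>x\<close> the sum
  \<open>g x = (\<Sum>w \<le> x. f w)\<close> has the single nonzero term \<open>f z\<close>, so \<open>supp g\<close> is infinite.
  Local finiteness and the minimum only serve to make the principal down-sets finite.\<close>

lemma finite_down_set:
  assumes "locally_finite_poset TYPE('a::order)" and "has_minimum TYPE('a)"
  shows "finite {w::'a. w \<le> x}"
proof -
  obtain m :: 'a where "\<And>w. m \<le> w"
    using assms(2) unfolding has_minimum_def by blast
  then have "{w. w \<le> x} = {w. m \<le> w \<and> w \<le> x}" by auto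
  then show ?thesis
    using assms(1) unfolding locally_finite_poset_def by metis
qed

lemma sum_down_set_single_nonzero:
  fixes f :: "'a::order \<Rightarrow> 'b::comm_monoid_add"
  assumes "finite {w. w \<le> x}" and "z \<le> x"
    and "\<And>y. y \<le> x \<Longrightarrow> y \<noteq> z \<Longrightarrow> f y = 0"
  shows "(\<Sum>w\<in>{w. w \<le> x}. f w) = f z"
proof -
  have "(\<Sum>w\<in>{w. w \<le> x}. f w) = (\<Sum>w\<in>{z}. f w)"
    by (rule sum.mono_neutral_right) (use assms in auto)
  then show ?thesis by simp
qed

lemma supp_zeta_transform_above_isolated:
  fixes f g :: "'a::order \<Rightarrow> complex"
  assumes down_finite: "\<And>x. finite {w::'a. w \<le> x}"
    and zeta: "\<And>x. g x = (\<Sum>w\<in>{w. w \<le> x}. f w)"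
    and "z \<in> supp f"
  shows "{x. z \<le> x \<and> (\<forall>y\<in>supp f - {z}. \<not> y \<le> x)} \<subseteq> supp g"
proof
  fix x
  assume x: "x \<in> {x. z \<le> x \<and> (\<forall>y\<in>supp f - {z}. \<not> y \<le> x)}"
  have "g x = f z"
    unfolding zeta
    by (rule sum_down_set_single_nonzero[OF down_finite]) (use x in \<open>auto simp: supp_def\<close>)
  then show "x \<in> supp g"
    using \<open>z \<in> supp f\<close> unfolding supp_def by simp
qed

theorem theorem1p2:
  assumes "locally_finite_poset TYPE('a::order)"
    and "has_minimum TYPE('a)"
    and "\<forall>S::'a set. finite S \<and> S \<noteq> {} \<longrightarrow>
           (\<exists>z\<in>S. infinite {x. z \<le> x \<and> (\<forall>y\<in>S - {z}. \<not> y \<le> x)})"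
  shows "moebius_uncertainty TYPE('a)"
  unfolding moebius_uncertainty_def
proof (intro allI impI)
  fix f g :: "'a \<Rightarrow> complex"
  assume "f \<noteq> (\<lambda>_. 0) \<and> g \<noteq> (\<lambda>_. 0) \<and> (\<forall>z. g z = (\<Sum>x\<in>{x. x \<le> z}. f x))"
  then have "supp f \<noteq> {}" and zeta: "\<And>x. g x = (\<Sum>w\<in>{w. w \<le> x}. f w)"
    unfolding supp_def by auto
  show "infinite (supp f) \<or> infinite (supp g)"
  proof (rule ccontr)
    assume "\<not> (infinite (supp f) \<or> infinite (supp g))"
    then have "finite (supp f)" and "finite (supp g)" by auto
    then obtain z where "z \<in> supp f"
      and inf: "infinite {x. z \<le> x \<and> (\<forall>y\<in>supp f - {z}. \<not> y \<le> x)}"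
      using assms(3) \<open>supp f \<noteq> {}\<close> by blast
    have "{x. z \<le> x \<and> (\<forall>y\<in>supp f - {z}. \<not> y \<le> x)} \<subseteq> supp g"
      using supp_zeta_transform_above_isolated finite_down_set[OF assms(1,2)] zeta \<open>z \<in> supp f\<close>
      by blast
    then show False
      using inf \<open>finite (supp g)\<close> finite_subset by blast
  qed
qed

end
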